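(* Let $p$ be a prime and let $A^*(\mathbf{Q}_p)$ be the group, under composition, of maps $f(x)=ax+b$ on $\mathbf{Q}_p$ with $a\in\mathbf{Q}_p\setminus\{0\}$, $b\in\mathbf{Q}_p$, topologized as a subset of $\mathbf{Q}_p\times\mathbf{Q}_p$ via $(a,b)$; let $A^*(\mathbf{Z}_p)$ be the subgroup with $|a|_p=1$, $b\in\mathbf{Z}_p$. For $f\in A^*(\mathbf{Q}_p)$ define $L(f)=\max(|a-1|_p,|b|_p)$. Fix $t\ge1$ and put $L'(f)=L(f)$ if $f\in A^*(\mathbf{Z}_p)$ and $L'(f)=t$ otherwise. Then $L'(f^{-1})=L'(f)$ and $L'(f\circ g)\le\max(L'(f),L'(g))$ for all $f,g\in A^*(\mathbf{Q}_p)$, and $L'(g^{-1}\circ f)$ is a left-invariant ultrametric on $A^*(\mathbf{Q}_p)$ determining its usual topology; for $f,g\in A^*(\mathbf{Z}_p)$ it equals $\max(|a-c|_p,|b-d|_p)$ where $g(x)=cx+d$.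
   Context: $|\cdot|_p$ is the $p$-adic absolute value and $\mathbf{Z}_p$ the $p$-adic integers. *)

theory Defs
  imports "HOL-Analysis.Analysis" "HOL-Computational_Algebra.Computational_Algebra"
begin

definition padic_abs_rat :: "nat \<Rightarrow> rat \<Rightarrow> real" where
  "padic_abs_rat p q =
     (if q = 0 then 0
      else (let (a, b) = quotient_of q in
            real p powi (int (multiplicity (int p) b) - int (multiplicity (int p) a))))"

text \<open>This is the defining property of
  Q_p as the completion of Q w.r.t. |.|_p (unique up to isometric isomorphism).\<close>
definition is_Qp :: "nat \<Rightarrow> ('a::field_char_0 \<Rightarrow> real) \<Rightarrow> bool" where
  "is_Qp p absv \<longleftrightarrow>
     (\<forall>x. absv x \<ge> 0) \<and> (\<forall>x. absv x = 0 \<longleftrightarrow> x = 0) \<and>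
     (\<forall>x y. absv (x * y) = absv x * absv y) \<and>
     (\<forall>x y. absv (x + y) \<le> max (absv x) (absv y)) \<and>
     (\<forall>q. absv (of_rat q) = padic_abs_rat p q) \<and>
     (\<forall>X::nat \<Rightarrow> 'a. (\<forall>e>0. \<exists>N. \<forall>m\<ge>N. \<forall>n\<ge>N. absv (X m - X n) < e) \<longrightarrow>
         (\<exists>l. \<forall>e>0. \<exists>N. \<forall>n\<ge>N. absv (X n - l) < e)) \<and>
     (\<forall>x. \<forall>e>0. \<exists>q. absv (x - of_rat q) < e)"

text \<open>Affine maps x \<mapsto> a x + b are represented by their coefficient pairs (a,b).\<close>
definition aff_fun :: "'a::field \<times> 'a \<Rightarrow> 'a \<Rightarrow> 'a" where
  "aff_fun f = (\<lambda>x. fst f * x + snd f)"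

definition aff_comp :: "'a::field \<times> 'a \<Rightarrow> 'a \<times> 'a \<Rightarrow> 'a \<times> 'a" where
  "aff_comp f g = (fst f * fst g, fst f * snd g + snd f)"

definition aff_inv :: "'a::field \<times> 'a \<Rightarrow> 'a \<times> 'a" where
  "aff_inv f = (inverse (fst f), - snd f / fst f)"

lemma aff_fun_comp: "aff_fun (aff_comp f g) = aff_fun f \<circ> aff_fun g"
  by (auto simp: aff_fun_def aff_comp_def fun_eq_iff algebra_simps)

lemma aff_fun_inv: "fst f \<noteq> 0 \<Longrightarrow> aff_fun (aff_inv f) \<circ> aff_fun f = id
    \<and> aff_fun f \<circ> aff_fun (aff_inv f) = id"
  by (auto simp: aff_fun_def aff_inv_def fun_eq_iff field_simps)

text \<open>A^*(Q_p): a \<noteq> 0.  A^*(Z_p): |a|_p = 1 and b \<in> Z_p (i.e. |b|_p \<le> 1).\<close>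
definition AQ :: "('a::field \<times> 'a) set" where
  "AQ = {f. fst f \<noteq> 0}"

definition AZ :: "('a::field \<Rightarrow> real) \<Rightarrow> ('a \<times> 'a) set" where
  "AZ absv = {f. absv (fst f) = 1 \<and> absv (snd f) \<le> 1}"

definition Lfun :: "('a::field \<Rightarrow> real) \<Rightarrow> 'a \<times> 'a \<Rightarrow> real" where
  "Lfun absv f = max (absv (fst f - 1)) (absv (snd f))"

definition Lprime :: "('a::field \<Rightarrow> real) \<Rightarrow> real \<Rightarrow> 'a \<times> 'a \<Rightarrow> real" where
  "Lprime absv t f = (if f \<in> AZ absv then Lfun absv f else t)"

end

theory Submission
  imports Defs
begin

text \<open>
  Only the axioms of a non-archimedean absolute value are used.

  For \<open>f = (a, b)\<close> and \<open>g = (c, e)\<close> we have \<open>g\<inverse> \<circ> f = (a / c, (b - e) / c)\<close>, so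
  \<open>d f g = max \<bar>a - c\<bar> \<bar>b - e\<bar> / \<bar>c\<bar>\<close> when \<open>\<bar>a\<bar> = \<bar>c\<bar>\<close> and \<open>\<bar>b - e\<bar> \<le> \<bar>c\<bar>\<close>, and \<open>d f g = t\<close>
  otherwise. This formula is symmetric in \<open>f, g\<close>, which gives \<open>L'(f\<inverse>) = L'(f)\<close> by taking
  \<open>g = id\<close>. On \<open>A\<^sup>*(\<int>\<^sub>p)\<close> the identity \<open>ac - 1 = a(c - 1) + (a - 1)\<close> and the ultrametric
  inequality give \<open>L(f \<circ> g) \<le> max (L f) (L g)\<close>, and outside it \<open>L' = t \<ge> 1 \<ge> L\<close>; the strong
  triangle inequality for \<open>d\<close> follows from \<open>h\<inverse>f = (h\<inverse>g)(g\<inverse>f)\<close>. Finally, perturbing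
  \<open>(a, b)\<close> by less than \<open>\<bar>a\<bar>\<close> does not change \<open>\<bar>a\<bar>\<close>, so near \<open>f\<close> the metric \<open>d\<close> is the
  coefficient max-metric scaled by \<open>1 / \<bar>a\<bar>\<close>; small balls of the two metrics are therefore
  nested in each other, and the max-metric is equivalent to the product metric.
\<close>

lemma openin_mtopology_if_mball_nested:
  assumes "Metric_space M d1" "Metric_space M d2"
    and "\<And>x r. x \<in> M \<Longrightarrow> r > 0 \<Longrightarrow> \<exists>s>0. Metric_space.mball M d2 x s \<subseteq> Metric_space.mball M d1 x r"
    and "openin (Metric_space.mtopology M d1) U"
  shows "openin (Metric_space.mtopology M d2) U"
proof -
  interpret M1: Metric_space M d1 by fact
  interpret M2: Metric_space M d2 by fact
  have "U \<subseteq> M" and balls: "\<And>x. x \<in> U \<Longrightarrow> \<exists>r>0. M1.mball x r \<subseteq> U"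
    using assms(4) M1.openin_mtopology by auto
  have "\<exists>s>0. M2.mball x s \<subseteq> U" if "x \<in> U" for x
  proof -
    obtain r where "r > 0" "M1.mball x r \<subseteq> U"
      using balls \<open>x \<in> U\<close> by blast
    moreover obtain s where "s > 0" "M2.mball x s \<subseteq> M1.mball x r"
      using assms(3) \<open>U \<subseteq> M\<close> \<open>x \<in> U\<close> \<open>r > 0\<close> by blast
    ultimately show ?thesis
      by blast
  qed
  with \<open>U \<subseteq> M\<close> show ?thesis
    unfolding M2.openin_mtopology by blast
qed

lemma mtopology_eq_if_mball_nested:
  assumes "Metric_space M d1" "Metric_space M d2"
    and "\<And>x r. x \<in> M \<Longrightarrow> r > 0 \<Longrightarrow> \<exists>s>0. Metric_space.mball M d2 x s \<subseteq> Metric_space.mball M d1 x r"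
    and "\<And>x r. x \<in> M \<Longrightarrow> r > 0 \<Longrightarrow> \<exists>s>0. Metric_space.mball M d1 x s \<subseteq> Metric_space.mball M d2 x r"
  shows "Metric_space.mtopology M d1 = Metric_space.mtopology M d2"
  unfolding topology_eq using openin_mtopology_if_mball_nested assms by metis

locale nonarchimedean_absv =
  fixes absv :: "'a::field \<Rightarrow> real"
  assumes absv_nonneg: "\<And>x. absv x \<ge> 0"
    and absv_eq_0_iff: "\<And>x. absv x = 0 \<longleftrightarrow> x = 0"
    and absv_mult: "\<And>x y. absv (x * y) = absv x * absv y"
    and absv_add_le_max: "\<And>x y. absv (x + y) \<le> max (absv x) (absv y)"
begin

lemma absv_0 [simp]: "absv 0 = 0"
  by (simp add: absv_eq_0_iff)

lemma absv_pos_iff: "absv x > 0 \<longleftrightarrow> x \<noteq> 0"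
  using absv_nonneg[of x] absv_eq_0_iff[of x] by linarith

lemma absv_1 [simp]: "absv 1 = 1"
  using absv_mult[of 1 1] absv_eq_0_iff[of 1] by simp

lemma absv_minus [simp]: "absv (- x) = absv x"
proof -
  have "absv (-1) * absv (-1) = 1"
    using absv_mult[of "-1" "-1"] by simp
  then have "(absv (-1) - 1) * (absv (-1) + 1) = 0"
    by (simp add: algebra_simps)
  then have "absv (-1) = 1"
    using absv_nonneg[of "-1"] by simp
  then show ?thesis
    using absv_mult[of "-1" x] by simp
qed

lemma absv_minus_commute: "absv (x - y) = absv (y - x)"
  using absv_minus[of "x - y"] by simp

lemma absv_inverse: "absv (inverse x) = inverse (absv x)"
proof (cases "x = 0")
  case False
  then have "absv x * absv (inverse x) = 1"
    using absv_mult[of x "inverse x"] by simp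
  then show ?thesis
    by (rule inverse_unique[symmetric])
qed simp

lemma absv_divide: "absv (x / y) = absv x / absv y"
  using absv_mult[of x "inverse y"] absv_inverse[of y] by (simp add: divide_inverse)

lemma absv_diff_le_max: "absv (x - y) \<le> max (absv x) (absv y)"
  using absv_add_le_max[of x "- y"] by simp

lemma absv_eq_if_diff_less: "absv (y - x) < absv x \<Longrightarrow> absv y = absv x"
  using absv_add_le_max[of "y - x" x] absv_diff_le_max[of y "y - x"] by (auto simp: max_def split: if_splits)

sublocale adist: Metric_space UNIV "\<lambda>x y. absv (x - y)"
proof
  fix x y z :: 'a
  have "absv (x - z) \<le> max (absv (x - y)) (absv (y - z))"
    using absv_add_le_max[of "x - y" "y - z"] by simp
  then show "absv (x - z) \<le> absv (x - y) + absv (y - z)"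
    using absv_nonneg[of "x - y"] absv_nonneg[of "y - z"] by linarith
qed (auto simp: absv_nonneg absv_eq_0_iff absv_minus_commute)

end

definition coeff_dist :: "('a::field \<Rightarrow> real) \<Rightarrow> 'a \<times> 'a \<Rightarrow> 'a \<times> 'a \<Rightarrow> real" where
  "coeff_dist absv f g = max (absv (fst f - fst g)) (absv (snd f - snd g))"

definition aff_dist :: "('a::field \<Rightarrow> real) \<Rightarrow> real \<Rightarrow> 'a \<times> 'a \<Rightarrow> 'a \<times> 'a \<Rightarrow> real" where
  "aff_dist absv t f g = Lprime absv t (aff_comp (aff_inv g) f)"

lemma aff_comp_inv_left: "aff_comp (aff_inv g) f = (fst f / fst g, (snd f - snd g) / fst g)"
  by (simp add: aff_comp_def aff_inv_def divide_inverse algebra_simps)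

lemma aff_comp_inv_chain:
  "fst g \<noteq> 0 \<Longrightarrow> aff_comp (aff_comp (aff_inv h) g) (aff_comp (aff_inv g) f) = aff_comp (aff_inv h) f"
  unfolding aff_comp_inv_left by (cases "fst h = 0") (simp_all add: aff_comp_def field_simps)

lemma aff_comp_inv_left_cancel:
  "fst h \<noteq> 0 \<Longrightarrow> aff_comp (aff_inv (aff_comp h g)) (aff_comp h f) = aff_comp (aff_inv g) f"
  unfolding aff_comp_inv_left by (cases "fst g = 0") (simp_all add: aff_comp_def field_simps)

lemma Lprime_eq_aff_dist:
  "Lprime absv t f = aff_dist absv t f (1, 0)"
  "Lprime absv t (aff_inv f) = aff_dist absv t (1, 0) f"
  by (simp_all add: aff_dist_def aff_comp_def aff_inv_def)

context nonarchimedean_absv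
begin

lemma coeff_dist_eq_0_iff: "coeff_dist absv f g = 0 \<longleftrightarrow> f = g"
proof -
  have "coeff_dist absv f g = 0 \<longleftrightarrow> absv (fst f - fst g) = 0 \<and> absv (snd f - snd g) = 0"
    unfolding coeff_dist_def using absv_nonneg[of "fst f - fst g"] absv_nonneg[of "snd f - snd g"]
    by linarith
  then show ?thesis
    by (simp add: absv_eq_0_iff prod_eq_iff)
qed

lemma Lfun_le_1: "f \<in> AZ absv \<Longrightarrow> Lfun absv f \<le> 1"
  using absv_diff_le_max[of "fst f" 1] by (auto simp: AZ_def Lfun_def)

lemma Lprime_le: "1 \<le> t \<Longrightarrow> Lprime absv t f \<le> t"
  using Lfun_le_1[of f] by (auto simp: Lprime_def)

lemma Lprime_nonneg: "0 \<le> t \<Longrightarrow> 0 \<le> Lprime absv t f"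
  using absv_nonneg by (auto simp: Lprime_def Lfun_def le_max_iff_disj)

lemma aff_comp_in_AZ:
  assumes "f \<in> AZ absv" "g \<in> AZ absv"
  shows "aff_comp f g \<in> AZ absv"
  using assms absv_add_le_max[of "fst f * snd g" "snd f"]
  by (auto simp: AZ_def aff_comp_def absv_mult)

lemma Lfun_aff_comp_le:
  assumes "f \<in> AZ absv" "g \<in> AZ absv"
  shows "Lfun absv (aff_comp f g) \<le> max (Lfun absv f) (Lfun absv g)"
proof -
  obtain a b c e where f: "f = (a, b)" and g: "g = (c, e)"
    by (cases f, cases g)
  have unit: "absv a = 1"
    using assms(1) by (simp add: AZ_def f)
  have "absv (a * c - 1) = absv (a * (c - 1) + (a - 1))"
    by (rule arg_cong[where f = absv]) (simp add: algebra_simps)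
  also have "\<dots> \<le> max (absv (c - 1)) (absv (a - 1))"
    using absv_add_le_max[of "a * (c - 1)" "a - 1"] by (simp add: absv_mult unit)
  finally have "absv (a * c - 1) \<le> max (absv (c - 1)) (absv (a - 1))" .
  moreover have "absv (a * e + b) \<le> max (absv e) (absv b)"
    using absv_add_le_max[of "a * e" b] by (simp add: absv_mult unit)
  ultimately show ?thesis
    by (auto simp: Lfun_def aff_comp_def f g le_max_iff_disj)
qed

lemma Lprime_aff_comp_le:
  assumes "1 \<le> t"
  shows "Lprime absv t (aff_comp f g) \<le> max (Lprime absv t f) (Lprime absv t g)"
proof (cases "f \<in> AZ absv \<and> g \<in> AZ absv")
  case True
  then show ?thesis
    using aff_comp_in_AZ Lfun_aff_comp_le by (simp add: Lprime_def)
next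
  case False
  then have "t \<le> max (Lprime absv t f) (Lprime absv t g)"
    by (auto simp: Lprime_def)
  then show ?thesis
    using Lprime_le[OF assms] by (meson order_trans)
qed

lemma aff_dist_eq:
  "aff_dist absv t f g =
    (if fst g \<noteq> 0 \<and> absv (fst f) = absv (fst g) \<and> absv (snd f - snd g) \<le> absv (fst g)
     then coeff_dist absv f g / absv (fst g) else t)"
proof (cases "fst g = 0")
  case False
  then have pos: "absv (fst g) > 0"
    by (simp add: absv_pos_iff)
  have "fst f / fst g - 1 = (fst f - fst g) / fst g"
    using False by (simp add: diff_divide_distrib)
  then have "Lfun absv (aff_comp (aff_inv g) f) = coeff_dist absv f g / absv (fst g)"
    using pos by (simp add: Lfun_def coeff_dist_def aff_comp_inv_left absv_divide max_divide_distrib_right)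
  moreover have "aff_comp (aff_inv g) f \<in> AZ absv
      \<longleftrightarrow> absv (fst f) = absv (fst g) \<and> absv (snd f - snd g) \<le> absv (fst g)"
    using pos by (auto simp: AZ_def aff_comp_inv_left absv_divide)
  ultimately show ?thesis
    using False by (simp add: aff_dist_def Lprime_def)
qed (simp add: aff_dist_def Lprime_def AZ_def aff_comp_inv_left)

lemma aff_dist_commute: "aff_dist absv t f g = aff_dist absv t g f"
proof (cases "fst f \<noteq> 0 \<and> fst g \<noteq> 0")
  case True
  then show ?thesis
    by (auto simp: aff_dist_eq coeff_dist_def absv_minus_commute)
qed (auto simp: aff_dist_eq absv_eq_0_iff)

lemma Lprime_aff_inv: "Lprime absv t (aff_inv f) = Lprime absv t f"
  by (metis Lprime_eq_aff_dist aff_dist_commute)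

lemma aff_dist_nonneg: "0 \<le> t \<Longrightarrow> 0 \<le> aff_dist absv t f g"
  by (simp add: aff_dist_def Lprime_nonneg)

lemma aff_dist_ultrametric:
  assumes "1 \<le> t" "fst g \<noteq> 0"
  shows "aff_dist absv t f h \<le> max (aff_dist absv t f g) (aff_dist absv t g h)"
  using Lprime_aff_comp_le[OF assms(1), of "aff_comp (aff_inv h) g" "aff_comp (aff_inv g) f"]
  by (simp add: aff_dist_def aff_comp_inv_chain assms(2) max.commute)

lemma aff_dist_eq_0_iff:
  assumes "t \<noteq> 0" "fst g \<noteq> 0"
  shows "aff_dist absv t f g = 0 \<longleftrightarrow> f = g"
  using assms coeff_dist_eq_0_iff[of f g] by (auto simp: aff_dist_eq absv_nonneg absv_eq_0_iff)

lemma Metric_space_aff_dist: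
  assumes "1 \<le> t"
  shows "Metric_space AQ (aff_dist absv t)"
proof
  fix f g h :: "'a \<times> 'a"
  assume "f \<in> AQ" "g \<in> AQ" "h \<in> AQ"
  then have "aff_dist absv t f h \<le> max (aff_dist absv t f g) (aff_dist absv t g h)"
    using assms aff_dist_ultrametric by (simp add: AQ_def)
  then show "aff_dist absv t f h \<le> aff_dist absv t f g + aff_dist absv t g h"
    using assms aff_dist_nonneg[of t f g] aff_dist_nonneg[of t g h]
    by (simp add: max_def split: if_splits)
qed (use assms in \<open>auto simp: aff_dist_commute aff_dist_eq_0_iff AQ_def aff_dist_nonneg\<close>)

lemma aff_dist_left_invariant:
  "fst h \<noteq> 0 \<Longrightarrow> aff_dist absv t (aff_comp h f) (aff_comp h g) = aff_dist absv t f g"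
  by (simp add: aff_dist_def aff_comp_inv_left_cancel)

lemma aff_dist_AZ:
  "f \<in> AZ absv \<Longrightarrow> g \<in> AZ absv \<Longrightarrow> aff_dist absv t f g = coeff_dist absv f g"
  using absv_diff_le_max[of "snd f" "snd g"] by (auto simp: aff_dist_eq AZ_def)

lemma aff_dist_eq_if_coeff_dist_less:
  assumes "fst f \<noteq> 0" "coeff_dist absv f g < absv (fst f)"
  shows "aff_dist absv t f g = coeff_dist absv f g / absv (fst f)"
proof -
  have "absv (fst g) = absv (fst f)"
    using assms(2) absv_eq_if_diff_less[of "fst g" "fst f"] absv_minus_commute[of "fst f"]
    by (simp add: coeff_dist_def)
  moreover have "fst g \<noteq> 0"
    using assms(1) calculation by (simp add: absv_eq_0_iff flip: absv_pos_iff)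
  ultimately show ?thesis
    using assms(2) by (simp add: aff_dist_eq coeff_dist_def)
qed

lemma coeff_dist_eq_if_aff_dist_less:
  assumes "aff_dist absv t f g < t"
  shows "coeff_dist absv f g = aff_dist absv t f g * absv (fst f)"
proof -
  have "fst g \<noteq> 0" "absv (fst f) = absv (fst g)"
    and "aff_dist absv t f g = coeff_dist absv f g / absv (fst g)"
    using assms by (simp_all add: aff_dist_eq split: if_splits)
  then show ?thesis
    by (simp add: absv_eq_0_iff)
qed

lemma aff_dist_less_if_coeff_dist_less:
  assumes "fst f \<noteq> 0" "coeff_dist absv f g < absv (fst f) * min 1 r"
  shows "aff_dist absv t f g < r"
proof -
  have pos: "absv (fst f) > 0"
    using assms(1) by (simp add: absv_pos_iff)
  then have "absv (fst f) * min 1 r \<le> absv (fst f)" "absv (fst f) * min 1 r \<le> absv (fst f) * r"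
    by (simp_all add: mult_left_mono)
  then have "coeff_dist absv f g < absv (fst f)" "coeff_dist absv f g < absv (fst f) * r"
    using assms(2) by linarith+
  then show ?thesis
    using assms(1) pos by (simp add: aff_dist_eq_if_coeff_dist_less divide_less_eq mult.commute)
qed

lemma coeff_dist_less_if_aff_dist_less:
  assumes "1 \<le> t" "fst f \<noteq> 0" "aff_dist absv t f g < min 1 (r / absv (fst f))"
  shows "coeff_dist absv f g < r"
proof -
  have "absv (fst f) > 0"
    using assms(2) by (simp add: absv_pos_iff)
  then show ?thesis
    using assms coeff_dist_eq_if_aff_dist_less[of t f g] by (simp add: less_divide_eq)
qed

lemma mtopology_aff_dist:
  assumes "1 \<le> t"
  shows "Metric_space.mtopology AQ (aff_dist absv t)
    = subtopology (prod_topology adist.mtopology adist.mtopology) AQ"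
proof -
  interpret adist12: Metric_space12 UNIV "\<lambda>x y. absv (x - y)" UNIV "\<lambda>x y. absv (x - y)"
    by (simp add: Metric_space12_def adist.Metric_space_axioms)
  let ?e = "prod_dist (\<lambda>x y. absv (x - y)) (\<lambda>x y. absv (x - y))"
  interpret D: Metric_space AQ "aff_dist absv t"
    using assms by (rule Metric_space_aff_dist)
  interpret E: Submetric UNIV ?e AQ
    using adist12.prod_metric by (simp add: Submetric_def Submetric_axioms_def)
  have e_bounds: "coeff_dist absv f g \<le> ?e f g" "?e f g \<le> 2 * coeff_dist absv f g" for f g :: "'a \<times> 'a"
    using adist12.component_le_prod_metric(1)[of "fst f" "fst g" "snd f" "snd g"]
      adist12.component_le_prod_metric(2)[of "snd f" "snd g" "fst f" "fst g"]
      adist12.prod_metric_le_components[of "fst f" "fst g" "snd f" "snd g"]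
    by (auto simp: coeff_dist_def)
  have "D.mtopology = E.sub.mtopology"
  proof (rule mtopology_eq_if_mball_nested)
    fix f :: "'a \<times> 'a" and r :: real
    assume f: "f \<in> AQ" and r: "r > 0"
    then have "fst f \<noteq> 0" and pos: "absv (fst f) > 0"
      by (simp_all add: AQ_def absv_pos_iff)
    have "E.sub.mball f (absv (fst f) * min 1 r) \<subseteq> D.mball f r"
    proof
      fix g assume "g \<in> E.sub.mball f (absv (fst f) * min 1 r)"
      then have "g \<in> AQ" "coeff_dist absv f g < absv (fst f) * min 1 r"
        using e_bounds(1)[of f g] by auto
      then show "g \<in> D.mball f r"
        using f \<open>fst f \<noteq> 0\<close> aff_dist_less_if_coeff_dist_less by simp
    qed
    moreover have "absv (fst f) * min 1 r > 0"
      using pos r by simp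
    ultimately show "\<exists>s>0. E.sub.mball f s \<subseteq> D.mball f r"
      by blast
    have "D.mball f (min 1 (r / 2 / absv (fst f))) \<subseteq> E.sub.mball f r"
    proof
      fix g assume "g \<in> D.mball f (min 1 (r / 2 / absv (fst f)))"
      then have "g \<in> AQ" "coeff_dist absv f g < r / 2"
        using coeff_dist_less_if_aff_dist_less[OF assms \<open>fst f \<noteq> 0\<close>, of g "r / 2"] by auto
      then show "g \<in> E.sub.mball f r"
        using f e_bounds(2)[of f g] by simp
    qed
    moreover have "min 1 (r / 2 / absv (fst f)) > 0"
      using pos r by simp
    ultimately show "\<exists>s>0. D.mball f s \<subseteq> E.sub.mball f r"
      by blast
  qed (use D.Metric_space_axioms E.sub.Metric_space_axioms in auto)
  also have "\<dots> = subtopology (prod_topology adist.mtopology adist.mtopology) AQ"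
    using E.mtopology_submetric adist12.mtopology_prod_metric by simp
  finally show ?thesis .
qed

end

theorem mainTheorem13:
  fixes p :: nat and absv :: "'a::field_char_0 \<Rightarrow> real" and t :: real
  assumes "prime p" and "is_Qp p absv" and "t \<ge> 1"
  defines "d \<equiv> \<lambda>f g. Lprime absv t (aff_comp (aff_inv g) f)"
  shows "(\<forall>f\<in>AQ. Lprime absv t (aff_inv f) = Lprime absv t f)
    \<and> (\<forall>f\<in>AQ. \<forall>g\<in>AQ. Lprime absv t (aff_comp f g) \<le> max (Lprime absv t f) (Lprime absv t g))
    \<and> Metric_space AQ d
    \<and> (\<forall>f\<in>AQ. \<forall>g\<in>AQ. \<forall>h\<in>AQ. d f h \<le> max (d f g) (d g h))
    \<and> (\<forall>f\<in>AQ. \<forall>g\<in>AQ. \<forall>h\<in>AQ. d (aff_comp h f) (aff_comp h g) = d f g)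
    \<and> Metric_space.mtopology AQ d =
        subtopology (prod_topology (Metric_space.mtopology UNIV (\<lambda>x y. absv (x - y)))
                                   (Metric_space.mtopology UNIV (\<lambda>x y. absv (x - y)))) AQ
    \<and> (\<forall>f\<in>AZ absv. \<forall>g\<in>AZ absv.
         d f g = max (absv (fst f - fst g)) (absv (snd f - snd g)))"
proof -
  interpret nonarchimedean_absv absv
    using assms(2) by unfold_locales (auto simp: is_Qp_def)
  have "d = aff_dist absv t"
    by (simp add: d_def aff_dist_def fun_eq_iff)
  moreover have "fst f \<noteq> 0" if "f \<in> AQ" for f :: "'a \<times> 'a"
    using that by (simp add: AQ_def)
  ultimately show ?thesis
    using assms(3)
    by (intro conjI ballI)
      (simp_all add: Lprime_aff_inv Lprime_aff_comp_le Metric_space_aff_dist aff_dist_ultrametric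
        aff_dist_left_invariant mtopology_aff_dist aff_dist_AZ coeff_dist_def)
qed

end
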